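(* Let $\kappa:[-1,1]\to\mathbb{R}$ be given by $\kappa(t)=\sum_{q\ge 0}\frac{J_q^2}{q!}t^q$, where $J_q\in\mathbb{R}$, $J_q\neq 0$ for infinitely many $q$, $\sum_{q\ge1}\frac{|J_q|}{(q-1)!}<\infty$ (so that $\kappa\in C^1([-1,1])$), and $\kappa(1)=1$. For $L\ge1$ let $\kappa_L=\kappa\circ\cdots\circ\kappa$ ($L$ times). Assume $\kappa'(1)<1$. Then for every $t\in[-1,1]$ the limit \[ \mathfrak{L}(t)=\lim_{L\to\infty}(\kappa'(1))^{-L}\bigl(1-\kappa_L(t)\bigr) \] exists in $[0,\infty)$. Moreover, if in addition there exist $c\in\mathbb{R}\setminus\{0\}$ and $\rho>1$ such that \[ 1-\kappa(t)=\kappa'(1)(1-t)-c(1-t)^{\rho}+o\bigl((1-t)^{\rho}\bigr)\quad\text{as } t\to1^-, \] then $\mathfrak{L}(t)=0$ if and only if $t\in\mathcal{I}(\kappa):=\{s\in[-1,1]:\kappa(s)=1\}$. *)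

theory Defs
  imports "HOL-Analysis.Analysis" "HOL-Library.Landau_Symbols"
begin

definition kappa :: "(nat \<Rightarrow> real) \<Rightarrow> real \<Rightarrow> real" where
  "kappa J t = (\<Sum>q. (J q)\<^sup>2 / fact q * t ^ q)"

definition kappaL :: "(nat \<Rightarrow> real) \<Rightarrow> nat \<Rightarrow> real \<Rightarrow> real" where
  "kappaL J L = (kappa J ^^ L)"

text \<open>The limit frak L(t) = lim_L (kappa'(1))^(-L) (1 - kappa_L(t)), where D = kappa'(1).\<close>
definition frakL :: "(nat \<Rightarrow> real) \<Rightarrow> real \<Rightarrow> real \<Rightarrow> real" where
  "frakL J D t = lim (\<lambda>L. (1 - kappaL J L t) / D ^ L)"

end

theory Submission
  imports Defs
begin

(* The coefficients J_q^2/q! of kappa are nonnegative and sum to kappa(1) = 1. Hence kappa maps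
   [-1,1] into (-1,1], and comparing 1 - s^q with q(1 - s) term by term gives
   1 - kappa(s) <= kappa'(1)(1 - s). So (1 - kappa_L(t)) / kappa'(1)^L is nonincreasing and
   nonnegative, and it converges.
   For the second part, the expansion at 1 gives 1 - kappa(y) >= kappa'(1)(1 - y)(1 - K(1 - y)^a)
   near 1, with a = rho - 1. The orbit of a point outside I(kappa) stays below 1 and eventually
   enters this neighbourhood, where its gaps decay like kappa'(1)^L. The correction factors then
   form a product of terms 1 - e r^k with r < 1, bounded below by exp(-2e/(1 - r)), so the limit
   is positive. *)

lemma abs_power_le_one_Icc:
  fixes y :: real
  assumes "y \<in> {-1..1}"
  shows "\<bar>y ^ q\<bar> \<le> 1"
  using assms by (auto simp: power_abs intro!: power_le_one)

lemma one_minus_power_le: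
  fixes s :: real
  assumes s: "s \<in> {-1..1}"
  shows "1 - s ^ q \<le> real q * (1 - s)"
proof -
  have "(\<Sum>i<q. s ^ i) \<le> of_nat (card {..<q}) * 1"
    by (rule sum_bounded_above) (use abs_power_le_one_Icc[OF s] in \<open>simp add: abs_le_iff\<close>)
  then have "(1 - s) * (\<Sum>i<q. s ^ i) \<le> (1 - s) * real q"
    using s by (intro mult_left_mono) auto
  then show ?thesis by (simp add: one_diff_power_eq mult.commute)
qed

lemma exp_minus_double_le_one_minus:
  fixes z :: real
  assumes "0 \<le> z" "z \<le> 1/2"
  shows "exp (-2 * z) \<le> 1 - z"
proof -
  have "1 + 2 * z \<le> exp (2 * z)" using exp_ge_add_one_self[of "2 * z"] by simp
  then have "exp (-2 * z) \<le> 1 / (1 + 2 * z)" using assms by (simp add: exp_minus field_simps)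
  also have "\<dots> \<le> 1 - z"
    using assms by (simp add: field_simps) (smt (verit) mult_left_le mult_nonneg_nonneg)
  finally show ?thesis .
qed

lemma exp_le_prod_one_minus_geometric:
  fixes e r :: real
  assumes "0 \<le> e" "e \<le> 1/2" "0 \<le> r" "r < 1"
  shows "exp (-2 * e / (1 - r)) \<le> (\<Prod>k<L. 1 - e * r ^ k)"
proof -
  have "(\<Sum>k<L. r ^ k) \<le> 1 / (1 - r)"
    using assms(3,4) by (simp add: sum_gp_strict divide_right_mono)
  then have "e * (\<Sum>k<L. r ^ k) \<le> e * (1 / (1 - r))"
    using assms(1) by (rule mult_left_mono)
  then have "(\<Sum>k<L. e * r ^ k) \<le> e / (1 - r)" by (simp add: sum_distrib_left)
  then have "exp (-2 * e / (1 - r)) \<le> exp (-2 * (\<Sum>k<L. e * r ^ k))" by simp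
  also have "\<dots> = (\<Prod>k<L. exp (-2 * (e * r ^ k)))" by (simp add: sum_distrib_left exp_sum)
  also have "\<dots> \<le> (\<Prod>k<L. 1 - e * r ^ k)"
  proof (rule prod_mono)
    fix k
    have "e * r ^ k \<le> e" using assms by (simp add: mult_left_le power_le_one)
    then show "0 \<le> exp (-2 * (e * r ^ k)) \<and> exp (-2 * (e * r ^ k)) \<le> 1 - e * r ^ k"
      using exp_minus_double_le_one_minus[of "e * r ^ k"] assms by simp
  qed
  finally show ?thesis .
qed


lemma power_mult_powr:
  fixes D x a :: real
  assumes "0 < D" and "0 \<le> x"
  shows "(D ^ L * x) powr a = (D powr a) ^ L * x powr a"
  using assms by (simp add: powr_mult powr_powr_swap flip: powr_realpow)


locale contraction_towards_one =
  fixes f :: "real \<Rightarrow> real" and D :: real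
  assumes maps_Icc: "\<And>s. s \<in> {-1..1} \<Longrightarrow> f s \<in> {-1<..1}"
    and gap_le: "\<And>s. s \<in> {-1..1} \<Longrightarrow> 1 - f s \<le> D * (1 - s)"
    and D_pos: "0 < D"
begin

lemma iterate_in_Icc:
  assumes "t \<in> {-1..1}"
  shows "(f ^^ L) t \<in> {-1..1}"
proof (induction L)
  case (Suc L)
  then show ?case using maps_Icc[of "(f ^^ L) t"] by auto
qed (use assms in simp)

lemma iterate_gap_step:
  assumes "t \<in> {-1..1}"
  shows "1 - (f ^^ Suc L) t \<le> D * (1 - (f ^^ L) t)"
  using gap_le iterate_in_Icc[OF assms] by simp

lemma iterate_gap_le:
  assumes t: "t \<in> {-1..1}"
  shows "1 - (f ^^ L) t \<le> D ^ L * (1 - t)"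
proof (induction L)
  case (Suc L)
  have "1 - (f ^^ Suc L) t \<le> D * (1 - (f ^^ L) t)" using iterate_gap_step[OF t] .
  also have "\<dots> \<le> D * (D ^ L * (1 - t))" using Suc D_pos by simp
  finally show ?case by simp
qed simp

lemma normalized_gap_convergent:
  assumes t: "t \<in> {-1..1}"
  shows "\<exists>l\<ge>0. (\<lambda>L. (1 - (f ^^ L) t) / D ^ L) \<longlonglongrightarrow> l"
proof -
  define X where "X = (\<lambda>L. (1 - (f ^^ L) t) / D ^ L)"
  have X_nonneg: "0 \<le> X L" for L using iterate_in_Icc[OF t, of L] D_pos by (auto simp: X_def)
  have X_dec: "X (Suc L) \<le> X L" for L
  proof -
    have "(1 - (f ^^ Suc L) t) / D ^ Suc L \<le> D * (1 - (f ^^ L) t) / D ^ Suc L"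
      using iterate_gap_step[OF t] D_pos by (intro divide_right_mono) auto
    then show ?thesis using D_pos by (simp add: X_def)
  qed
  obtain l where "X \<longlonglongrightarrow> l"
    using decseq_convergent[OF decseq_SucI[of X, OF X_dec], of 0] X_nonneg by blast
  moreover have "0 \<le> l" using LIMSEQ_le_const[OF \<open>X \<longlonglongrightarrow> l\<close>] X_nonneg by blast
  ultimately show ?thesis unfolding X_def by blast
qed

lemma orbit_stays_in_left_neighbourhood:
  assumes D_lt: "D < 1" and b: "0 \<le> b" and below_one: "\<And>y. y \<in> {b<..<1} \<Longrightarrow> f y < 1"
    and v: "v \<in> {b<..<1}"
  shows "(f ^^ L) v \<in> {b<..<1}"
proof (induction L)
  case (Suc L)
  have "1 - (f ^^ Suc L) v \<le> D * (1 - (f ^^ L) v)" using iterate_gap_step v b by simp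
  moreover have "D * (1 - (f ^^ L) v) < 1 - (f ^^ L) v" using Suc D_lt by simp
  ultimately have "(f ^^ L) v < (f ^^ Suc L) v" by linarith
  then show ?case using Suc below_one by auto
qed (use v in simp)

lemma normalized_gap_lower_bound:
  fixes K a b v :: real
  assumes D_lt: "D < 1" and K: "0 \<le> K" and a: "0 < a" and b: "0 \<le> b" and v: "v \<in> {b<..<1}"
    and below_one: "\<And>y. y \<in> {b<..<1} \<Longrightarrow> f y < 1"
    and gap_ge: "\<And>y. y \<in> {b<..<1} \<Longrightarrow> D * (1 - y) * (1 - K * (1 - y) powr a) \<le> 1 - f y"
    and small: "\<And>y. y \<in> {b<..<1} \<Longrightarrow> K * (1 - y) powr a \<le> 1/2"
  shows "\<exists>\<beta>>0. \<forall>L. \<beta> \<le> (1 - (f ^^ L) v) / D ^ L"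
proof -
  have v_Icc: "v \<in> {-1..1}" using v b by auto
  note orbit = orbit_stays_in_left_neighbourhood[OF D_lt b below_one v]
  define r where "r = D powr a"
  define e where "e = K * (1 - v) powr a"
  have r: "0 \<le> r" "r < 1" using D_pos D_lt a by (auto simp: r_def powr01_less_one)
  have e: "0 \<le> e" "e \<le> 1/2" using K small v by (auto simp: e_def)
  have decay: "K * (1 - (f ^^ L) v) powr a \<le> e * r ^ L" for L
  proof -
    have "(1 - (f ^^ L) v) powr a \<le> (D ^ L * (1 - v)) powr a"
      using iterate_gap_le[OF v_Icc] orbit[of L] a by (intro powr_mono2) auto
    also have "\<dots> = r ^ L * (1 - v) powr a" using D_pos v by (simp add: r_def power_mult_powr)
    finally have "K * (1 - (f ^^ L) v) powr a \<le> K * (r ^ L * (1 - v) powr a)"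
      using K by (rule mult_left_mono)
    then show ?thesis by (simp add: e_def mult_ac)
  qed
  have product: "(1 - v) * (\<Prod>k<L. 1 - e * r ^ k) \<le> (1 - (f ^^ L) v) / D ^ L" for L
  proof (induction L)
    case (Suc L)
    define w where "w = 1 - (f ^^ L) v"
    have w: "0 < w" using orbit[of L] by (simp add: w_def)
    have "e * r ^ L \<le> 1" using e r mult_left_le[of "r ^ L" e] power_le_one[of r L] by linarith
    then have "(1 - v) * (\<Prod>k<L. 1 - e * r ^ k) * (1 - e * r ^ L) \<le> w / D ^ L * (1 - K * w powr a)"
      using Suc.IH decay[of L] w D_pos by (intro mult_mono) (auto simp: w_def)
    also have "\<dots> = D * w * (1 - K * w powr a) / D ^ Suc L" using D_pos by simp
    also have "\<dots> \<le> (1 - (f ^^ Suc L) v) / D ^ Suc L"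
      using gap_ge[OF orbit[of L]] D_pos unfolding w_def by (intro divide_right_mono) auto
    finally show ?case by (simp add: mult.assoc)
  qed simp
  show ?thesis
  proof (intro exI conjI allI)
    show "0 < (1 - v) * exp (-2 * e / (1 - r))" using v by simp
    show "(1 - v) * exp (-2 * e / (1 - r)) \<le> (1 - (f ^^ L) v) / D ^ L" for L
      using order_trans[OF mult_left_mono[OF exp_le_prod_one_minus_geometric[OF e r]] product[of L]] v
      by simp
  qed
qed

lemma orbit_enters_left_neighbourhood:
  assumes below_one: "\<And>s. s \<in> {-1<..<1} \<Longrightarrow> f s < 1" and D_lt: "D < 1"
    and t: "t \<in> {-1..1}" and ft: "f t \<noteq> 1" and b: "b < 1"
  shows "\<exists>M. (f ^^ M) t \<in> {b<..<1}"
proof -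
  have inside: "(f ^^ Suc L) t \<in> {-1<..<1}" for L
  proof (induction L)
    case 0
    then show ?case using maps_Icc[OF t] ft by auto
  next
    case (Suc L)
    then show ?case using below_one[OF Suc] maps_Icc[of "(f ^^ Suc L) t"] by auto
  qed
  have "(\<lambda>L. D ^ L * (1 - t)) \<longlonglongrightarrow> 0"
    using D_pos D_lt by (intro tendsto_mult_left_zero LIMSEQ_power_zero) auto
  then have "\<forall>\<^sub>F L in sequentially. D ^ L * (1 - t) < 1 - b"
    using b by (intro order_tendstoD(2)) auto
  then obtain M where M: "D ^ M * (1 - t) < 1 - b" by (auto simp: eventually_sequentially)
  have "D ^ Suc M * (1 - t) \<le> D ^ M * (1 - t)"
    using D_pos D_lt t by (auto intro!: mult_right_mono mult_left_le_one_le)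
  then have "1 - (f ^^ Suc M) t < 1 - b" using iterate_gap_le[OF t, of "Suc M"] M by linarith
  then have "(f ^^ Suc M) t \<in> {b<..<1}" using inside[of M] by (simp del: funpow.simps)
  then show ?thesis ..
qed

lemma normalized_gap_limit_zero_iff:
  assumes fixed: "f 1 = 1" and below_one: "\<And>s. s \<in> {-1<..<1} \<Longrightarrow> f s < 1" and D_lt: "D < 1"
    and near_one: "\<exists>K\<ge>0. \<exists>a>0. \<exists>b\<in>{0..<1}. \<forall>y\<in>{b<..<1}.
        D * (1 - y) * (1 - K * (1 - y) powr a) \<le> 1 - f y \<and> K * (1 - y) powr a \<le> 1/2"
    and t: "t \<in> {-1..1}"
  shows "lim (\<lambda>L. (1 - (f ^^ L) t) / D ^ L) = 0 \<longleftrightarrow> f t = 1"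
proof
  assume ft: "f t = 1"
  have "(f ^^ Suc L) t = 1" for L by (induction L) (simp_all add: ft fixed)
  then have "(1 - (f ^^ L) t) / D ^ L = 0" if "1 \<le> L" for L
    using that by (cases L) simp_all
  then have "\<forall>\<^sub>F L in sequentially. (1 - (f ^^ L) t) / D ^ L = 0"
    by (rule eventually_sequentiallyI)
  then show "lim (\<lambda>L. (1 - (f ^^ L) t) / D ^ L) = 0" by (intro limI tendsto_eventually)
next
  assume lim0: "lim (\<lambda>L. (1 - (f ^^ L) t) / D ^ L) = 0"
  show "f t = 1"
  proof (rule ccontr)
    assume ft: "f t \<noteq> 1"
    obtain K a b where K: "0 \<le> K" and a: "0 < a" and b: "b \<in> {0..<1}"
      and near: "\<forall>y\<in>{b<..<1}. D * (1 - y) * (1 - K * (1 - y) powr a) \<le> 1 - f y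
                               \<and> K * (1 - y) powr a \<le> 1/2"
      using near_one by blast
    obtain M where v: "(f ^^ M) t \<in> {b<..<1}"
      using orbit_enters_left_neighbourhood[OF below_one D_lt t ft] b by auto
    obtain \<beta> where \<beta>: "0 < \<beta>" "\<And>L. \<beta> \<le> (1 - (f ^^ L) ((f ^^ M) t)) / D ^ L"
      using normalized_gap_lower_bound[OF D_lt K a _ v] below_one near b by force
    obtain l where l: "(\<lambda>L. (1 - (f ^^ L) t) / D ^ L) \<longlonglongrightarrow> l"
      using normalized_gap_convergent[OF t] by blast
    have "\<beta> / D ^ M \<le> l"
    proof (rule LIMSEQ_le_const[OF l], intro exI allI impI)
      fix n assume "M \<le> n"
      define L where "L = n - M"
      have n: "n = L + M" using \<open>M \<le> n\<close> by (simp add: L_def)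
      have "\<beta> / D ^ M \<le> (1 - (f ^^ L) ((f ^^ M) t)) / D ^ L / D ^ M"
        using \<beta>(2)[of L] D_pos by (intro divide_right_mono) auto
      then show "\<beta> / D ^ M \<le> (1 - (f ^^ n) t) / D ^ n" by (simp add: n funpow_add power_add)
    qed
    moreover have "0 < \<beta> / D ^ M" using \<beta>(1) D_pos by simp
    moreover have "l = 0" using limI[OF l] lim0 by simp
    ultimately show False by simp
  qed
qed
end

lemma eventually_at_left_one_in_unit_interval: "\<forall>\<^sub>F y in at_left (1::real). y \<in> {0<..<1}"
  by (rule eventually_at_left_real) simp

lemma gap_lower_bound_near_one:
  fixes f :: "real \<Rightarrow> real" and D c \<rho> :: real
  assumes D: "0 < D" and \<rho>: "1 < \<rho>"
    and expansion: "(\<lambda>t. (1 - f t) - (D * (1 - t) - c * (1 - t) powr \<rho>))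
                      \<in> o[at_left 1](\<lambda>t. (1 - t) powr \<rho>)"
  shows "\<exists>K\<ge>0. \<exists>a>0. \<exists>b\<in>{0..<1}. \<forall>y\<in>{b<..<1}.
           D * (1 - y) * (1 - K * (1 - y) powr a) \<le> 1 - f y \<and> K * (1 - y) powr a \<le> 1/2"
proof -
  define K where "K = (\<bar>c\<bar> + 1) / D"
  define a where "a = \<rho> - 1"
  have K: "0 \<le> K" and a: "0 < a" using D \<rho> by (simp_all add: K_def a_def)
  have remainder: "\<forall>\<^sub>F y in at_left 1.
      \<bar>(1 - f y) - (D * (1 - y) - c * (1 - y) powr \<rho>)\<bar> \<le> (1 - y) powr \<rho>"
    using landau_o.smallD[OF expansion, of 1] by simp
  have "((\<lambda>y. K * (1 - y) powr a) \<longlongrightarrow> K * 0) (at_left (1::real))"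
    using a eventually_at_left_one_in_unit_interval
    by (intro tendsto_mult tendsto_const tendsto_zero_powrI tendsto_eq_intros)
       (auto elim: eventually_mono)
  then have small: "\<forall>\<^sub>F y in at_left 1. K * (1 - y) powr a < 1/2"
    by (intro order_tendstoD(2)) auto
  have "\<forall>\<^sub>F y in at_left 1.
      D * (1 - y) * (1 - K * (1 - y) powr a) \<le> 1 - f y \<and> K * (1 - y) powr a \<le> 1/2"
    using remainder small eventually_at_left_one_in_unit_interval
  proof eventually_elim
    case (elim y)
    have DK: "D * K = \<bar>c\<bar> + 1" using D by (simp add: K_def)
    have split_power: "(1 - y) powr \<rho> = (1 - y) * (1 - y) powr a"
      using elim(3) powr_add[of "1 - y" 1 a] by (simp add: a_def)
    have "D * (1 - y) * (1 - K * (1 - y) powr a) = D * (1 - y) - (D * K) * ((1 - y) * (1 - y) powr a)"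
      by (simp add: algebra_simps)
    also have "\<dots> = D * (1 - y) - (\<bar>c\<bar> + 1) * (1 - y) powr \<rho>"
      by (simp only: DK split_power)
    also have "\<dots> \<le> 1 - f y"
    proof -
      have "c * (1 - y) powr \<rho> \<le> \<bar>c\<bar> * (1 - y) powr \<rho>" by (intro mult_right_mono) auto
      then show ?thesis using elim(1) by (simp add: abs_le_iff algebra_simps)
    qed
    finally show ?case using elim(2) by simp
  qed
  then obtain b where "b < 1" and b: "\<And>y. b < y \<Longrightarrow> y < 1 \<Longrightarrow>
      D * (1 - y) * (1 - K * (1 - y) powr a) \<le> 1 - f y \<and> K * (1 - y) powr a \<le> 1/2"
    by (auto simp: eventually_at_left[OF zero_less_one[where 'a=real]])
  then have "\<forall>y\<in>{max b 0<..<1}.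
      D * (1 - y) * (1 - K * (1 - y) powr a) \<le> 1 - f y \<and> K * (1 - y) powr a \<le> 1/2"
    by auto
  moreover have "max b 0 \<in> {0..<1}" using \<open>b < 1\<close> by auto
  ultimately show ?thesis using K a by blast
qed


lemma sum_le_sums:
  fixes f :: "nat \<Rightarrow> real"
  assumes "f sums s" and "\<And>n. 0 \<le> f n" and "finite I"
  shows "sum f I \<le> s"
  using sum_le_suminf[of f I] assms by (auto simp: sums_iff)

lemma summable_power_series_Icc:
  fixes a :: "nat \<Rightarrow> real"
  assumes nonneg: "\<And>q. 0 \<le> a q" and "summable a" and y: "y \<in> {-1..1}"
  shows "summable (\<lambda>q. a q * y ^ q)"
  by (rule summable_comparison_test'[OF \<open>summable a\<close>])
     (use nonneg abs_power_le_one_Icc[OF y] in \<open>auto simp: abs_mult intro!: mult_left_le\<close>)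

lemma power_series_one_minus_sums:
  fixes a :: "nat \<Rightarrow> real"
  assumes nonneg: "\<And>q. 0 \<le> a q" and a: "a sums 1" and y: "y \<in> {-1..1}"
  shows "(\<lambda>q. a q * (1 - y ^ q)) sums (1 - (\<Sum>q. a q * y ^ q))"
  using sums_diff[OF a summable_sums[OF summable_power_series_Icc[OF nonneg sums_summable[OF a] y]]]
  by (simp add: algebra_simps)

lemma power_series_one_minus_terms_nonneg:
  fixes a :: "nat \<Rightarrow> real"
  assumes "\<And>q. 0 \<le> a q" and "y \<in> {-1..1}"
  shows "0 \<le> a q * (1 - y ^ q)"
  using assms(1)[of q] abs_power_le_one_Icc[OF assms(2), of q] by (simp add: abs_le_iff)

lemma power_series_le_one:
  fixes a :: "nat \<Rightarrow> real"
  assumes nonneg: "\<And>q. 0 \<le> a q" and a: "a sums 1" and s: "s \<in> {-1..1}"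
  shows "(\<Sum>q. a q * s ^ q) \<le> 1"
  using sums_le[OF power_series_one_minus_terms_nonneg[of a, OF nonneg s] sums_zero
      power_series_one_minus_sums[OF nonneg a s]]
  by simp

lemma power_series_moment_le_deriv:
  fixes a :: "nat \<Rightarrow> real"
  assumes nonneg: "\<And>q. 0 \<le> a q" and a: "a sums 1"
    and deriv: "((\<lambda>y. \<Sum>q. a q * y ^ q) has_real_derivative D) (at 1 within {-1..1})"
  shows "summable (\<lambda>q. real q * a q)" and "(\<Sum>q. real q * a q) \<le> D"
proof -
  define P where "P y = (\<Sum>q. a q * y ^ q)" for y :: real
  have P1: "P 1 = 1" using a by (simp add: P_def sums_iff)
  have quotient: "((\<lambda>y. (P y - P 1) / (y - 1)) \<longlongrightarrow> D) (at_left 1)"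
    using deriv by (simp add: P_def[abs_def] has_field_derivative_iff at_within_Icc_at_left)
  have partial: "(\<Sum>q<N. real q * a q) \<le> D" for N
  proof (rule tendsto_le[OF trivial_limit_at_left_real quotient])
    have "((\<lambda>y. (y ^ q - 1) / (y - 1)) \<longlongrightarrow> real q) (at_left 1)" for q
      using DERIV_pow[of q 1 "{..<1}"] by (simp add: has_field_derivative_iff)
    then show "((\<lambda>y. \<Sum>q<N. (y ^ q - 1) / (y - 1) * a q) \<longlongrightarrow> (\<Sum>q<N. real q * a q)) (at_left 1)"
      by (intro tendsto_sum tendsto_mult_right)
    show "\<forall>\<^sub>F y in at_left 1. (\<Sum>q<N. (y ^ q - 1) / (y - 1) * a q) \<le> (P y - P 1) / (y - 1)"
      using eventually_at_left_one_in_unit_interval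
    proof eventually_elim
      case (elim y)
      then have y: "y \<in> {-1..1}" by auto
      have "(\<Sum>q<N. a q * (1 - y ^ q)) \<le> 1 - P y"
        unfolding P_def using power_series_one_minus_sums[OF nonneg a y]
        by (rule sum_le_sums) (simp_all add: power_series_one_minus_terms_nonneg[of a, OF nonneg y])
      then have "(\<Sum>q<N. a q * (1 - y ^ q)) / (1 - y) \<le> (1 - P y) / (1 - y)"
        using elim by (intro divide_right_mono) auto
      moreover have "(\<Sum>q<N. (y ^ q - 1) / (y - 1) * a q) = (\<Sum>q<N. a q * (1 - y ^ q)) / (1 - y)"
        using elim by (simp add: sum_divide_distrib) (intro sum.cong; simp add: field_simps)
      moreover have "(P y - P 1) / (y - 1) = (1 - P y) / (1 - y)"
        using elim P1 by (simp add: field_simps)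
      ultimately show ?case by simp
    qed
  qed
  show moment: "summable (\<lambda>q. real q * a q)"
    using nonneg partial by (intro summableI_nonneg_bounded) auto
  show "(\<Sum>q. real q * a q) \<le> D" using suminf_le_const[OF moment partial] .
qed

lemma power_series_gap_le:
  fixes a :: "nat \<Rightarrow> real"
  assumes nonneg: "\<And>q. 0 \<le> a q" and a: "a sums 1"
    and deriv: "((\<lambda>y. \<Sum>q. a q * y ^ q) has_real_derivative D) (at 1 within {-1..1})"
    and s: "s \<in> {-1..1}"
  shows "1 - (\<Sum>q. a q * s ^ q) \<le> D * (1 - s)"
proof -
  note moment = power_series_moment_le_deriv[OF nonneg a deriv]
  have moment_sums: "(\<lambda>q. real q * a q * (1 - s)) sums ((\<Sum>q. real q * a q) * (1 - s))"
    using moment(1) by (intro sums_mult2 summable_sums)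
  have "1 - (\<Sum>q. a q * s ^ q) \<le> (\<Sum>q. real q * a q) * (1 - s)"
  proof (rule sums_le[OF _ power_series_one_minus_sums[OF nonneg a s] moment_sums])
    show "a q * (1 - s ^ q) \<le> real q * a q * (1 - s)" for q
      using mult_left_mono[OF one_minus_power_le[OF s] nonneg[of q]] by (simp add: mult_ac)
  qed
  also have "\<dots> \<le> D * (1 - s)" using moment(2) s by (intro mult_right_mono) auto
  finally show ?thesis .
qed

lemma power_series_less_one:
  fixes a :: "nat \<Rightarrow> real"
  assumes nonneg: "\<And>q. 0 \<le> a q" and a: "a sums 1"
    and q0: "0 < q0" "0 < a q0" and s: "\<bar>s\<bar> < 1"
  shows "(\<Sum>q. a q * s ^ q) < 1"
proof -
  have s_Icc: "s \<in> {-1..1}" using s by auto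
  have "\<bar>s ^ q0\<bar> < 1" using s q0(1) by (simp add: power_abs power_less_one_iff)
  then have "0 < a q0 * (1 - s ^ q0)" using q0(2) by simp
  also have "\<dots> \<le> 1 - (\<Sum>q. a q * s ^ q)"
    using sum_le_sums[OF power_series_one_minus_sums[OF nonneg a s_Icc]
        power_series_one_minus_terms_nonneg[of a, OF nonneg s_Icc], of "{q0}"]
    by simp
  finally show ?thesis by simp
qed

lemma power_series_greater_minus_one:
  fixes a :: "nat \<Rightarrow> real"
  assumes nonneg: "\<And>q. 0 \<le> a q" and a: "a sums 1"
    and a0: "0 < a 0" and s: "s \<in> {-1..1}"
  shows "-1 < (\<Sum>q. a q * s ^ q)"
proof -
  have "(\<lambda>q. a q * (1 + s ^ q)) sums (1 + (\<Sum>q. a q * s ^ q))"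
    using sums_add[OF a summable_sums[OF summable_power_series_Icc[OF nonneg sums_summable[OF a] s]]]
    by (simp add: algebra_simps)
  moreover have "0 \<le> a q * (1 + s ^ q)" for q
    using nonneg[of q] abs_power_le_one_Icc[OF s, of q] by (simp add: abs_le_iff)
  ultimately have "a 0 * (1 + s ^ 0) \<le> 1 + (\<Sum>q. a q * s ^ q)"
    using sum_le_sums[of _ _ "{0}"] by fastforce
  then show ?thesis using a0 by simp
qed

lemma kappa_contraction_towards_one:
  fixes J :: "nat \<Rightarrow> real" and D :: real
  assumes inf_nz: "infinite {q. J q \<noteq> 0}" and convergent: "summable (\<lambda>q. (J q)\<^sup>2 / fact q)"
    and norm1: "kappa J 1 = 1"
    and deriv1: "(kappa J has_real_derivative D) (at 1 within {-1..1})"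
    and D_lt: "D < 1"
  shows "contraction_towards_one (kappa J) D" and "\<And>s. s \<in> {-1<..<1} \<Longrightarrow> kappa J s < 1"
proof -
  define a where "a q = (J q)\<^sup>2 / fact q" for q
  have kappa: "kappa J = (\<lambda>y. \<Sum>q. a q * y ^ q)" by (simp add: kappa_def a_def fun_eq_iff)
  have nonneg: "0 \<le> a q" for q by (simp add: a_def)
  have a: "a sums 1" using convergent norm1 by (simp add: kappa a_def[abs_def] sums_iff)
  note deriv = deriv1[unfolded kappa]
  note moment = power_series_moment_le_deriv[OF nonneg a deriv]
  obtain q0 where q0: "0 < q0" "J q0 \<noteq> 0" using inf_nz unfolding infinite_nat_iff_unbounded by auto
  then have a_q0: "0 < a q0" by (simp add: a_def)
  have "0 < real q0 * a q0" using q0(1) a_q0 by simp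
  also have "\<dots> \<le> (\<Sum>q. real q * a q)"
    using sum_le_suminf[OF moment(1), of "{q0}"] nonneg by simp
  finally have D_pos: "0 < D" using moment(2) by linarith
  have a_0: "0 < a 0"
  proof (rule ccontr)
    assume "\<not> 0 < a 0"
    then have "a q \<le> real q * a q" for q using nonneg[of q] by (cases q) (auto simp: mult_le_cancel_right1)
    then have "(\<Sum>q. a q) \<le> (\<Sum>q. real q * a q)" using sums_summable[OF a] moment(1) by (rule suminf_le)
    then show False using a moment(2) D_lt by (simp add: sums_iff)
  qed
  show "contraction_towards_one (kappa J) D"
  proof
    fix s :: real assume s: "s \<in> {-1..1}"
    show "kappa J s \<in> {-1<..1}"
      using power_series_greater_minus_one[OF nonneg a a_0 s] power_series_le_one[OF nonneg a s]
      by (simp add: kappa)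
    show "1 - kappa J s \<le> D * (1 - s)" using power_series_gap_le[OF nonneg a deriv s] by (simp add: kappa)
  qed (fact D_pos)
  show "kappa J s < 1" if "s \<in> {-1<..<1}" for s
    using power_series_less_one[OF nonneg a q0(1) a_q0, of s] that by (simp add: kappa abs_less_iff)
qed


lemma suminf_eq_if_not_summable:
  "\<not> summable f \<Longrightarrow> \<not> summable g \<Longrightarrow> suminf f = suminf g"
  by (simp add: suminf_def summable_def)

(* Divergent series all have the same unspecified suminf, so kappa J 1 = 1 then forces kappa to
   equal 1 wherever its series diverges, in particular on a left neighbourhood of 1. *)
lemma kappa_flat_at_one_if_divergent:
  fixes J :: "nat \<Rightarrow> real" and D :: real
  assumes divergent: "\<not> summable (\<lambda>q. (J q)\<^sup>2 / fact q)" and norm1: "kappa J 1 = 1"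
    and deriv1: "(kappa J has_real_derivative D) (at 1 within {-1..1})"
  shows "D = 0" and flat: "\<forall>\<^sub>F y in at_left 1. kappa J y = 1"
proof -
  define a where "a q = (J q)\<^sup>2 / fact q" for q
  have kappa: "kappa J y = (\<Sum>q. a q * y ^ q)" for y by (simp add: kappa_def a_def)
  have nonneg: "0 \<le> a q" for q by (simp add: a_def)
  have divergent_a: "\<not> summable a" using divergent by (simp add: a_def[abs_def])
  have "(kappa J \<longlongrightarrow> 1) (at_left 1)"
    using DERIV_continuous[OF deriv1] norm1 by (simp add: continuous_within at_within_Icc_at_left)
  then have below_two: "\<forall>\<^sub>F y in at_left 1. kappa J y < 2" by (intro order_tendstoD(2)) auto
  obtain N where N: "2 < (\<Sum>q<N. a q)"
    using summableI_nonneg_bounded[of a 2] nonneg divergent_a by (meson not_le)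
  have "((\<lambda>y. \<Sum>q<N. a q * y ^ q) \<longlongrightarrow> (\<Sum>q<N. a q * 1 ^ q)) (at_left (1::real))"
    by (intro tendsto_intros)
  then have "\<forall>\<^sub>F y in at_left 1. 2 < (\<Sum>q<N. a q * y ^ q)" using N by (intro order_tendstoD(1)) auto
  then show flat: "\<forall>\<^sub>F y in at_left 1. kappa J y = 1"
    using below_two eventually_at_left_one_in_unit_interval
  proof eventually_elim
    case (elim y)
    have "\<not> summable (\<lambda>q. a q * y ^ q)"
    proof
      assume "summable (\<lambda>q. a q * y ^ q)"
      then have "(\<Sum>q<N. a q * y ^ q) \<le> kappa J y"
        unfolding kappa using elim(3) nonneg by (intro sum_le_suminf) auto
      then show False using elim by simp
    qed
    then show ?case
      using suminf_eq_if_not_summable[OF _ divergent_a] norm1 by (simp add: kappa)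
  qed
  have "((\<lambda>y. (kappa J y - kappa J 1) / (y - 1)) \<longlongrightarrow> D) (at_left 1)"
    using deriv1 by (simp add: has_field_derivative_iff at_within_Icc_at_left)
  moreover have "((\<lambda>y. (kappa J y - kappa J 1) / (y - 1)) \<longlongrightarrow> 0) (at_left 1)"
    using flat norm1 by (intro tendsto_eventually) (auto elim: eventually_mono)
  ultimately show "D = 0" using tendsto_unique trivial_limit_at_left_real by blast
qed

lemma powr_term_not_small_o:
  fixes g :: "real \<Rightarrow> real" and c \<rho> :: real
  assumes "c \<noteq> 0" and "\<forall>\<^sub>F t in at_left 1. g t = c * (1 - t) powr \<rho>"
  shows "g \<notin> o[at_left 1](\<lambda>t. (1 - t) powr \<rho>)"
proof
  assume "g \<in> o[at_left 1](\<lambda>t. (1 - t) powr \<rho>)"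
  then have "(\<lambda>t. c * (1 - t) powr \<rho>) \<in> o[at_left 1](\<lambda>t. (1 - t) powr \<rho>)"
    using landau_o.small.in_cong[OF assms(2)] by simp
  then have "\<forall>\<^sub>F t in at_left 1. (1 - t) powr \<rho> = 0"
    using \<open>c \<noteq> 0\<close> by (simp add: landau_o.small_refl_iff)
  then have "\<forall>\<^sub>F t in at_left (1::real). False"
    using eventually_at_left_one_in_unit_interval by eventually_elim simp
  then show False by (simp add: trivial_limit_at_left_real)
qed


lemma kappa_normalized_gap_convergent:
  fixes J :: "nat \<Rightarrow> real" and D :: real
  assumes inf_nz: "infinite {q. J q \<noteq> 0}" and norm1: "kappa J 1 = 1"
    and deriv1: "(kappa J has_real_derivative D) (at 1 within {-1..1})"
    and D_lt: "D < 1" and t: "t \<in> {-1..1}"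
  shows "\<exists>l\<ge>0. (\<lambda>L. (1 - kappaL J L t) / D ^ L) \<longlonglongrightarrow> l"
proof (cases "summable (\<lambda>q. (J q)\<^sup>2 / fact q)")
  case True
  then interpret contraction_towards_one "kappa J" D
    using kappa_contraction_towards_one(1)[OF inf_nz _ norm1 deriv1 D_lt] by blast
  show ?thesis using normalized_gap_convergent[OF t] by (simp add: kappaL_def)
next
  case False
  then have "D = 0" by (rule kappa_flat_at_one_if_divergent(1)[OF _ norm1 deriv1])
  then have "(\<lambda>L. (1 - kappaL J L t) / D ^ L) \<longlonglongrightarrow> 0"
    by (intro tendsto_eventually eventually_sequentiallyI[of 1]) simp
  then show ?thesis by blast
qed

lemma frakL_eq_zero_iff:
  fixes J :: "nat \<Rightarrow> real" and D c \<rho> :: real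
  assumes inf_nz: "infinite {q. J q \<noteq> 0}" and norm1: "kappa J 1 = 1"
    and deriv1: "(kappa J has_real_derivative D) (at 1 within {-1..1})" and D_lt: "D < 1"
    and c: "c \<noteq> 0" and \<rho>: "1 < \<rho>"
    and expansion: "(\<lambda>t. (1 - kappa J t) - (D * (1 - t) - c * (1 - t) powr \<rho>))
                      \<in> o[at_left 1](\<lambda>t. (1 - t) powr \<rho>)"
    and t: "t \<in> {-1..1}"
  shows "frakL J D t = 0 \<longleftrightarrow> kappa J t = 1"
proof (cases "summable (\<lambda>q. (J q)\<^sup>2 / fact q)")
  case True
  note kappa = kappa_contraction_towards_one[OF inf_nz True norm1 deriv1 D_lt]
  interpret contraction_towards_one "kappa J" D by (fact kappa(1))
  show ?thesis
    using normalized_gap_limit_zero_iff[OF norm1 kappa(2) D_lt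
        gap_lower_bound_near_one[OF D_pos \<rho> expansion] t]
    by (simp add: frakL_def kappaL_def)
next
  case False
  note flat = kappa_flat_at_one_if_divergent[OF False norm1 deriv1]
  have "\<forall>\<^sub>F y in at_left 1.
      (1 - kappa J y) - (D * (1 - y) - c * (1 - y) powr \<rho>) = c * (1 - y) powr \<rho>"
    using flat(2) by (rule eventually_mono) (simp add: flat(1))
  then have "(\<lambda>y. (1 - kappa J y) - (D * (1 - y) - c * (1 - y) powr \<rho>))
      \<notin> o[at_left 1](\<lambda>t. (1 - t) powr \<rho>)"
    by (rule powr_term_not_small_o[OF c])
  then show ?thesis using expansion by contradiction
qed


theorem lemma3p6:
  fixes J :: "nat \<Rightarrow> real" and D :: real
  assumes inf_nz: "infinite {q. J q \<noteq> 0}"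
    and summ: "summable (\<lambda>q. \<bar>J (Suc q)\<bar> / fact q)"
    and norm1: "kappa J 1 = 1"
    and deriv1: "(kappa J has_real_derivative D) (at 1 within {-1..1})"
    and Dlt: "D < 1"
  shows "(\<forall>t\<in>{-1..1}. \<exists>l\<ge>0. (\<lambda>L. (1 - kappaL J L t) / D ^ L) \<longlonglongrightarrow> l)
       \<and> ((\<exists>c \<rho>. c \<noteq> 0 \<and> \<rho> > 1 \<and>
             (\<lambda>t. (1 - kappa J t) - (D * (1 - t) - c * (1 - t) powr \<rho>))
               \<in> o[at_left 1](\<lambda>t. (1 - t) powr \<rho>))
          \<longrightarrow> (\<forall>t\<in>{-1..1}. frakL J D t = 0 \<longleftrightarrow> t \<in> {s\<in>{-1..1}. kappa J s = 1}))"
  using kappa_normalized_gap_convergent[OF inf_nz norm1 deriv1 Dlt]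
    frakL_eq_zero_iff[OF inf_nz norm1 deriv1 Dlt]
  by auto

end
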